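(* Let $f:\{0,1\}^n\to\{0,1\}$ be a boolean function such that $f(x)=f(\bar x)$ for all $x\in\{0,1\}^n$, where $\bar x$ is the bitwise negation of $x$. Then $Q_E^{na}(f)\le n-1$.
   Context: Nonadaptive exact quantum query model: let $\mathcal H_{\rm in}$ have orthonormal basis $|0\rangle,\dots,|n\rangle$ and let the oracle $O_x$ act by $|i\rangle\mapsto(-1)^{x_i}|i\rangle$ with convention $x_0=0$. A nonadaptive quantum algorithm making $k$ queries consists of an input-independent state $|\psi\rangle\in\mathcal H_{\rm in}^{\otimes k}\otimes\mathcal H_{\rm work}$ (with $\mathcal H_{\rm work}$ a finite-dimensional workspace), to which $O_x^{\otimes k}\otimes I$ is applied, followed by an input-independent two-outcome measurement with outcomes labelled $0,1$. It computes $f$ exactly if for every $x$ the outcome is $f(x)$ with probability $1$. $Q_E^{na}(f)$ is the minimum such $k$. *)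

theory Defs
  imports Complex_Main
begin

text \<open>Inputs x in {0,1}^n are bool lists of length n (True = 1); x_i = x ! (i-1) for 1 <= i <= n,
  and x_0 = 0.  The space H_in^{(x)k} (x) H_work has orthonormal basis indexed by pairs
  (is, w) with is a list of k query indices in {0..n} and w < d (workspace of dimension d).
  Vectors are functions from basis labels to complex numbers (only values on the basis set matter).\<close>

type_synonym qlabel = "nat list \<times> nat"

definition qbasis :: "nat \<Rightarrow> nat \<Rightarrow> nat \<Rightarrow> qlabel set" where
  "qbasis n k d = {(is, w). length is = k \<and> (\<forall>j\<in>set is. j \<le> n) \<and> w < d}"

definition input_bit :: "bool list \<Rightarrow> nat \<Rightarrow> bool" where
  "input_bit x i = (if i = 0 then False else x ! (i - 1))"

text \<open>O_x^{(x)k} (x) I is diagonal: |i_1..i_k, w> maps to prod_j (-1)^{x_{i_j}} |i_1..i_k, w>.\<close>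
definition oracle_phase :: "bool list \<Rightarrow> nat list \<Rightarrow> complex" where
  "oracle_phase x is = (\<Prod>j\<leftarrow>is. if input_bit x j then -1 else 1)"

definition apply_oracle :: "bool list \<Rightarrow> (qlabel \<Rightarrow> complex) \<Rightarrow> qlabel \<Rightarrow> complex" where
  "apply_oracle x \<psi> = (\<lambda>(is, w). oracle_phase x is * \<psi> (is, w))"

definition mat_apply :: "qlabel set \<Rightarrow> (qlabel \<Rightarrow> qlabel \<Rightarrow> complex) \<Rightarrow> (qlabel \<Rightarrow> complex) \<Rightarrow> qlabel \<Rightarrow> complex" where
  "mat_apply B M \<psi> = (\<lambda>b. \<Sum>c\<in>B. M b c * \<psi> c)"

definition is_projector :: "qlabel set \<Rightarrow> (qlabel \<Rightarrow> qlabel \<Rightarrow> complex) \<Rightarrow> bool" where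
  "is_projector B P \<longleftrightarrow>
     (\<forall>b\<in>B. \<forall>c\<in>B. P c b = cnj (P b c)) \<and>
     (\<forall>b\<in>B. \<forall>c\<in>B. (\<Sum>e\<in>B. P b e * P e c) = P b c)"

definition sq_norm_on :: "qlabel set \<Rightarrow> (qlabel \<Rightarrow> complex) \<Rightarrow> real" where
  "sq_norm_on B v = (\<Sum>b\<in>B. (cmod (v b))\<^sup>2)"

definition prob_outcome :: "qlabel set \<Rightarrow> (qlabel \<Rightarrow> qlabel \<Rightarrow> complex) \<Rightarrow> (qlabel \<Rightarrow> complex) \<Rightarrow> bool \<Rightarrow> real" where
  "prob_outcome B P \<psi> r =
     (if r then sq_norm_on B (mat_apply B P \<psi>)
      else sq_norm_on B (\<lambda>b. \<psi> b - mat_apply B P \<psi> b))"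

definition na_exact_alg :: "nat \<Rightarrow> (bool list \<Rightarrow> bool) \<Rightarrow> nat \<Rightarrow> nat \<Rightarrow> (qlabel \<Rightarrow> complex)
    \<Rightarrow> (qlabel \<Rightarrow> qlabel \<Rightarrow> complex) \<Rightarrow> bool" where
  "na_exact_alg n f k d \<psi> P \<longleftrightarrow>
     sq_norm_on (qbasis n k d) \<psi> = 1 \<and>
     is_projector (qbasis n k d) P \<and>
     (\<forall>x. length x = n \<longrightarrow> prob_outcome (qbasis n k d) P (apply_oracle x \<psi>) (f x) = 1)"

definition computes_na :: "nat \<Rightarrow> (bool list \<Rightarrow> bool) \<Rightarrow> nat \<Rightarrow> bool" where
  "computes_na n f k \<longleftrightarrow> (\<exists>d \<psi> P. na_exact_alg n f k d \<psi> P)"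

definition QE_na :: "nat \<Rightarrow> (bool list \<Rightarrow> bool) \<Rightarrow> nat" where
  "QE_na n f = (LEAST k. computes_na n f k)"

end

theory Submission
  imports Defs
begin

(* Write y = (x_1 xor x_n, ..., x_{n-1} xor x_n) for the "relative bits" of x.  Since
   f(x) = f(not x), f(x) depends only on y.  Query slot j (0 <= j < n - 1) is prepared in
   u_j = (|j+1> + |n>)/sqrt 2; the oracle maps it to (-1)^{x_n} ((-1)^{y_j}|j+1> + |n>)/sqrt 2.
   So after the queries the state is, up to a global sign, the product state phi_y.  The states
   phi_y for the 2^{n-1} strings y are orthonormal, hence measuring with the projector onto the
   span of {phi_y : f accepts y} outputs f(x) with certainty. *)

definition orthonormal_on :: "qlabel set \<Rightarrow> 'i set \<Rightarrow> ('i \<Rightarrow> qlabel \<Rightarrow> complex) \<Rightarrow> bool" where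
  "orthonormal_on B I \<phi> \<longleftrightarrow>
     (\<forall>y\<in>I. \<forall>z\<in>I. (\<Sum>b\<in>B. cnj (\<phi> y b) * \<phi> z b) = (if y = z then 1 else 0))"

definition span_projector :: "'i set \<Rightarrow> ('i \<Rightarrow> qlabel \<Rightarrow> complex) \<Rightarrow> qlabel \<Rightarrow> qlabel \<Rightarrow> complex" where
  "span_projector Y \<phi> b c = (\<Sum>y\<in>Y. \<phi> y b * cnj (\<phi> y c))"

lemma span_projector_apply:
  assumes on: "orthonormal_on B I \<phi>" and "finite Y" "Y \<subseteq> I" "z \<in> I"
  shows "mat_apply B (span_projector Y \<phi>) (\<lambda>b. s * \<phi> z b) = (\<lambda>b. if z \<in> Y then s * \<phi> z b else 0)"
proof
  fix b
  have "mat_apply B (span_projector Y \<phi>) (\<lambda>b. s * \<phi> z b) b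
      = (\<Sum>y\<in>Y. s * \<phi> y b * (\<Sum>c\<in>B. cnj (\<phi> y c) * \<phi> z c))"
    unfolding mat_apply_def span_projector_def sum_distrib_right sum_distrib_left
    by (subst sum.swap) (simp add: mult_ac)
  also have "\<dots> = (\<Sum>y\<in>Y. if y = z then s * \<phi> z b else 0)"
    using on \<open>Y \<subseteq> I\<close> \<open>z \<in> I\<close> by (intro sum.cong) (auto simp: orthonormal_on_def)
  also have "\<dots> = (if z \<in> Y then s * \<phi> z b else 0)"
    using \<open>finite Y\<close> by (simp add: sum.delta')
  finally show "mat_apply B (span_projector Y \<phi>) (\<lambda>b. s * \<phi> z b) b = \<dots>" .
qed

lemma span_projector_is_projector:
  assumes on: "orthonormal_on B I \<phi>" and "finite Y" "Y \<subseteq> I"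
  shows "is_projector B (span_projector Y \<phi>)"
  unfolding is_projector_def
proof (intro conjI ballI)
  fix b c
  show "span_projector Y \<phi> c b = cnj (span_projector Y \<phi> b c)"
    by (simp add: span_projector_def mult.commute)
  have "(\<Sum>e\<in>B. span_projector Y \<phi> b e * span_projector Y \<phi> e c)
      = (\<Sum>z\<in>Y. mat_apply B (span_projector Y \<phi>) (\<lambda>e. 1 * \<phi> z e) b * cnj (\<phi> z c))"
    unfolding mat_apply_def span_projector_def[of Y \<phi> _ c] sum_distrib_right sum_distrib_left
    by (subst sum.swap) (simp add: mult_ac)
  also have "\<dots> = span_projector Y \<phi> b c"
    using span_projector_apply[OF assms, of _ 1] \<open>Y \<subseteq> I\<close>
    by (auto simp: span_projector_def intro!: sum.cong)
  finally show "(\<Sum>e\<in>B. span_projector Y \<phi> b e * span_projector Y \<phi> e c) = span_projector Y \<phi> b c" .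
qed

lemma sq_norm_on_unit_multiple:
  assumes "orthonormal_on B I \<phi>" "z \<in> I" "cmod s = 1"
  shows "sq_norm_on B (\<lambda>b. s * \<phi> z b) = 1"
proof -
  have "(cmod (s * \<phi> z b))\<^sup>2 = Re (cnj (\<phi> z b) * \<phi> z b)" for b
    using \<open>cmod s = 1\<close>
    by (metis Re_complex_of_real complex_norm_square mult.commute mult_1 norm_mult)
  then have "sq_norm_on B (\<lambda>b. s * \<phi> z b) = Re (\<Sum>b\<in>B. cnj (\<phi> z b) * \<phi> z b)"
    by (simp add: sq_norm_on_def)
  also have "(\<Sum>b\<in>B. cnj (\<phi> z b) * \<phi> z b) = 1"
    using assms(1,2) by (simp add: orthonormal_on_def)
  finally show ?thesis by simp
qed

lemma prob_outcome_cong: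
  assumes "\<And>b. b \<in> B \<Longrightarrow> \<psi> b = \<psi>' b"
  shows "prob_outcome B P \<psi> r = prob_outcome B P \<psi>' r"
proof -
  have "mat_apply B P \<psi> = mat_apply B P \<psi>'"
    unfolding mat_apply_def using assms by (intro ext sum.cong) auto
  then show ?thesis
    unfolding prob_outcome_def sq_norm_on_def using assms by (auto intro!: sum.cong)
qed

lemma span_projector_measurement:
  assumes on: "orthonormal_on B I \<phi>" and "finite Y" "Y \<subseteq> I" "z \<in> I" "cmod s = 1"
  shows "prob_outcome B (span_projector Y \<phi>) (\<lambda>b. s * \<phi> z b) (z \<in> Y) = 1"
  using sq_norm_on_unit_multiple[OF on \<open>z \<in> I\<close> \<open>cmod s = 1\<close>]
  by (simp add: prob_outcome_def span_projector_apply[OF assms(1-4)])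

(* Summing a product over all words of length k factorizes into a product of sums;
   this is how inner products of tensor product states are computed. *)
lemma sum_lists_prod:
  fixes h :: "nat \<Rightarrow> 'a \<Rightarrow> 'b::comm_semiring_1"
  assumes "finite A"
  shows "(\<Sum>is\<in>{is. length is = k \<and> set is \<subseteq> A}. \<Prod>j<k. h j (is ! j)) = (\<Prod>j<k. \<Sum>a\<in>A. h j a)"
proof (induction k arbitrary: h)
  case 0
  have "{is::'a list. length is = 0 \<and> set is \<subseteq> A} = {[]}" by auto
  then show ?case by simp
next
  case (Suc k)
  let ?L = "\<lambda>k. {is::'a list. length is = k \<and> set is \<subseteq> A}"
  have cons_image: "?L (Suc k) = (\<lambda>(a, is). a # is) ` (A \<times> ?L k)"
    by (auto simp: length_Suc_conv)
  have inj: "inj_on (\<lambda>(a, is). a # is) (A \<times> ?L k)" by (auto simp: inj_on_def)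
  have "(\<Sum>is\<in>?L (Suc k). \<Prod>j<Suc k. h j (is ! j))
      = (\<Sum>a\<in>A. \<Sum>is\<in>?L k. h 0 a * (\<Prod>j<k. h (Suc j) (is ! j)))"
    unfolding cons_image sum.reindex[OF inj]
    by (simp add: sum.cartesian_product prod.lessThan_Suc_shift case_prod_beta
        del: prod.lessThan_Suc)
  also have "\<dots> = (\<Sum>a\<in>A. h 0 a * (\<Prod>j<k. \<Sum>b\<in>A. h (Suc j) b))"
    by (simp add: sum_distrib_left[symmetric] Suc.IH[of "\<lambda>j. h (Suc j)"])
  also have "\<dots> = (\<Prod>j<Suc k. \<Sum>a\<in>A. h j a)"
    by (simp add: prod.lessThan_Suc_shift sum_distrib_right del: prod.lessThan_Suc)
  finally show ?case .
qed

definition query_vec :: "nat \<Rightarrow> bool \<Rightarrow> nat \<Rightarrow> nat \<Rightarrow> real" where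
  "query_vec n a j i =
     ((if i = Suc j then (if a then -1 else 1) else 0) + (if i = n then 1 else 0)) / sqrt 2"

definition prod_state :: "nat \<Rightarrow> bool list \<Rightarrow> qlabel \<Rightarrow> complex" where
  "prod_state n y b = complex_of_real (\<Prod>j<length y. query_vec n (y ! j) j (fst b ! j))"

lemma query_vec_inner:
  assumes "Suc j < n"
  shows "(\<Sum>i\<le>n. query_vec n a j i * query_vec n a' j i) = (if a = a' then 1 else 0)"
proof -
  have "query_vec n a j i * query_vec n a' j i =
      (if i = Suc j then (if a = a' then 1 else -1) / 2 else 0) + (if i = n then 1 / 2 else 0)" for i
    using assms by (auto simp: query_vec_def)
  then show ?thesis
    using assms by (simp add: sum.distrib)
qed

lemma sum_qbasis_1:
  "(\<Sum>b\<in>qbasis n k 1. F b) = (\<Sum>is\<in>{is. length is = k \<and> set is \<subseteq> {..n}}. F (is, 0))"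
proof -
  have "qbasis n k 1 = (\<lambda>is. (is, 0)) ` {is. length is = k \<and> set is \<subseteq> {..n}}"
    by (auto simp: qbasis_def)
  then show ?thesis by (simp add: sum.reindex inj_on_def)
qed

lemma prod_state_orthonormal:
  assumes "k \<le> n - 1"
  shows "orthonormal_on (qbasis n k 1) {y. length y = k} (prod_state n)"
  unfolding orthonormal_on_def
proof (intro ballI)
  fix y z :: "bool list" assume "y \<in> {y. length y = k}" "z \<in> {y. length y = k}"
  then have len: "length y = k" "length z = k" by auto
  have "(\<Sum>b\<in>qbasis n k 1. cnj (prod_state n y b) * prod_state n z b)
      = complex_of_real (\<Sum>is\<in>{is. length is = k \<and> set is \<subseteq> {..n}}.
          \<Prod>j<k. query_vec n (y ! j) j (is ! j) * query_vec n (z ! j) j (is ! j))"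
    unfolding sum_qbasis_1 by (simp add: prod_state_def len prod.distrib)
  also have "\<dots> = complex_of_real (\<Prod>j<k. \<Sum>i\<le>n. query_vec n (y ! j) j i * query_vec n (z ! j) j i)"
    using sum_lists_prod[OF finite_atMost, of "\<lambda>j i. query_vec n (y ! j) j i * query_vec n (z ! j) j i"]
    by (rule arg_cong)
  also have "\<dots> = complex_of_real (\<Prod>j<k. if y ! j = z ! j then 1 else 0)"
    using assms by (intro arg_cong[where f = complex_of_real] prod.cong refl query_vec_inner) auto
  also have "\<dots> = (if y = z then 1 else 0)"
    using len by (auto simp: list_eq_iff_nth_eq)
  finally show "(\<Sum>b\<in>qbasis n k 1. cnj (prod_state n y b) * prod_state n z b) = \<dots>" .
qed

lemma prod_list_map_conv_prod_nth:
  "prod_list (map g xs) = (\<Prod>j<length xs. g (xs ! j))"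
  by (induction xs) (simp_all add: prod.lessThan_Suc_shift del: prod.lessThan_Suc)

definition relative_bits :: "bool list \<Rightarrow> bool list" where
  "relative_bits x = map (\<lambda>a. a \<noteq> last x) (butlast x)"

lemma length_relative_bits [simp]: "length (relative_bits x) = length x - 1"
  by (simp add: relative_bits_def)

lemma relative_bits_nth:
  assumes "length x = n" "Suc j < n"
  shows "relative_bits x ! j = (input_bit x (Suc j) \<noteq> input_bit x n)"
proof -
  have "x \<noteq> []" "j < length x - 1" using assms by auto
  then show ?thesis
    using assms by (simp add: relative_bits_def input_bit_def nth_butlast last_conv_nth)
qed

lemma oracle_phase_conv_prod:
  "oracle_phase x ks = complex_of_real (\<Prod>j<length ks. if input_bit x (ks ! j) then -1 else 1)"
  unfolding oracle_phase_def prod_list_map_conv_prod_nth of_real_prod by (rule prod.cong) auto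

lemma oracle_query_vec:
  assumes "Suc j < n"
  shows "(if input_bit x i then -1 else 1) * query_vec n False j i
       = (if input_bit x n then -1 else 1) * query_vec n (input_bit x (Suc j) \<noteq> input_bit x n) j i"
  using assms by (auto simp: query_vec_def)

lemma oracle_on_prod_state:
  assumes "length x = n" "b \<in> qbasis n (n - 1) 1"
  shows "apply_oracle x (prod_state n (replicate (n - 1) False)) b
       = (if input_bit x n then -1 else 1) ^ (n - 1) * prod_state n (relative_bits x) b"
proof -
  obtain ks w where b: "b = (ks, w)" and len: "length ks = n - 1"
    using assms(2) by (cases b) (auto simp: qbasis_def)
  let ?sign = "\<lambda>i. if input_bit x i then -1 else 1 :: real"
  have "apply_oracle x (prod_state n (replicate (n - 1) False)) b
      = complex_of_real (\<Prod>j<n - 1. ?sign (ks ! j) * query_vec n False j (ks ! j))"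
    by (simp add: b apply_oracle_def oracle_phase_conv_prod len prod_state_def prod.distrib
        del: of_real_prod)
  also have "\<dots> = complex_of_real (\<Prod>j<n - 1. ?sign n * query_vec n (relative_bits x ! j) j (ks ! j))"
    using assms(1) by (intro arg_cong[where f = complex_of_real] prod.cong refl)
      (simp add: oracle_query_vec relative_bits_nth)
  also have "\<dots> = (if input_bit x n then -1 else 1) ^ (n - 1) * prod_state n (relative_bits x) b"
    using assms(1) by (simp add: b prod_state_def prod.distrib)
  finally show ?thesis .
qed

lemma relative_bits_snoc [simp]: "relative_bits (xs @ [c]) = map (\<lambda>a. a \<noteq> c) xs"
  by (simp add: relative_bits_def)

lemma relative_bits_eq_imp_complement:
  assumes "length x' = length x" "relative_bits x' = relative_bits x"
  shows "x' = x \<or> x' = map Not x"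
proof (cases x rule: rev_exhaust)
  case Nil
  then show ?thesis using assms(1) by simp
next
  case (snoc xs c)
  obtain xs' c' where x': "x' = xs' @ [c']"
    using assms(1) snoc by (cases x' rule: rev_exhaust) auto
  have len: "length xs' = length xs" and same: "map (\<lambda>a. a \<noteq> c') xs' = map (\<lambda>a. a \<noteq> c) xs"
    using assms snoc x' by auto
  show ?thesis
  proof (cases "c' = c")
    case True
    then have "xs' = xs" using len same by (auto simp: list_eq_iff_nth_eq)
    then show ?thesis using True snoc x' by simp
  next
    case False
    then have "xs' = map Not xs" using len same by (auto simp: list_eq_iff_nth_eq)
    then show ?thesis using False snoc x' by simp
  qed
qed

lemma symmetric_fun_via_relative_bits:
  assumes sym: "\<forall>x. length x = n \<longrightarrow> f x = f (map Not x)" and "length x = n"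
  shows "f x \<longleftrightarrow> relative_bits x \<in> relative_bits ` {x. length x = n \<and> f x}"
proof
  assume "relative_bits x \<in> relative_bits ` {x. length x = n \<and> f x}"
  then obtain x' where "length x' = n" "f x'" "relative_bits x' = relative_bits x" by auto
  then have "x' = x \<or> x' = map Not x"
    using relative_bits_eq_imp_complement \<open>length x = n\<close> by simp
  then show "f x"
    using \<open>f x'\<close> sym \<open>length x = n\<close> by blast
qed (use \<open>length x = n\<close> in auto)

definition folding_state :: "nat \<Rightarrow> qlabel \<Rightarrow> complex" where
  "folding_state n = prod_state n (replicate (n - 1) False)"

definition folding_measurement :: "nat \<Rightarrow> (bool list \<Rightarrow> bool) \<Rightarrow> qlabel \<Rightarrow> qlabel \<Rightarrow> complex" where
  "folding_measurement n f =
     span_projector (relative_bits ` {x. length x = n \<and> f x}) (prod_state n)"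

lemma folding_algorithm_exact:
  assumes sym: "\<forall>x. length x = n \<longrightarrow> f x = f (map Not x)"
  shows "na_exact_alg n f (n - 1) 1 (folding_state n) (folding_measurement n f)"
proof -
  define B where "B = qbasis n (n - 1) 1"
  define Y where "Y = relative_bits ` {x. length x = n \<and> f x}"
  have on: "orthonormal_on B {y. length y = n - 1} (prod_state n)"
    unfolding B_def by (rule prod_state_orthonormal) simp
  have Y: "finite Y" "Y \<subseteq> {y. length y = n - 1}"
    using finite_lists_length_eq[of "UNIV :: bool set" n] by (auto simp: Y_def)
  show ?thesis
    unfolding na_exact_alg_def B_def[symmetric] folding_measurement_def Y_def[symmetric]
  proof (intro conjI allI impI)
    show "sq_norm_on B (folding_state n) = 1"
      using sq_norm_on_unit_multiple[OF on, of "replicate (n - 1) False" 1]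
      by (simp add: folding_state_def)
    show "is_projector B (span_projector Y (prod_state n))"
      using on Y by (rule span_projector_is_projector)
    fix x :: "bool list" assume x: "length x = n"
    let ?s = "(if input_bit x n then -1 else 1 :: complex) ^ (n - 1)"
    have "f x \<longleftrightarrow> relative_bits x \<in> Y"
      unfolding Y_def by (rule symmetric_fun_via_relative_bits[OF sym x])
    then have "prob_outcome B (span_projector Y (prod_state n)) (apply_oracle x (folding_state n)) (f x)
        = prob_outcome B (span_projector Y (prod_state n))
            (\<lambda>b. ?s * prod_state n (relative_bits x) b) (relative_bits x \<in> Y)"
      using oracle_on_prod_state[OF x] unfolding B_def folding_state_def
      by (simp only:) (rule prob_outcome_cong)
    also have "\<dots> = 1"
      using on Y x by (intro span_projector_measurement) (auto simp: norm_power)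
    finally show "prob_outcome B (span_projector Y (prod_state n))
        (apply_oracle x (folding_state n)) (f x) = 1" .
  qed
qed

theorem corollary7p4:
  fixes n :: nat and f :: "bool list \<Rightarrow> bool"
  assumes "\<forall>x. length x = n \<longrightarrow> f x = f (map Not x)"
  shows "QE_na n f \<le> n - 1"
proof -
  have "computes_na n f (n - 1)"
    unfolding computes_na_def using folding_algorithm_exact[OF assms] by blast
  then show ?thesis
    unfolding QE_na_def by (rule Least_le)
qed

end
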